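(* The conjugacy growth of Thompson's group $V$ is exponential.
   Context: Let $\mathfrak{C}=\{0,1\}^\omega$ be the Cantor space with the product topology. For $w_1,w_2\in\{0,1\}^*$, a homeomorphism maps $w_1\mathfrak{C}$ rigidly to $w_2\mathfrak{C}$ if it restricts to $w_1y\mapsto w_2y$. Thompson's group $V$ is the group of homeomorphisms $v$ of $\mathfrak{C}$ such that every $x\in\mathfrak{C}$ lies in a cone $w\mathfrak{C}$ that $v$ maps rigidly onto some cone; $V$ is finitely generated. The conjugacy growth function with respect to a finite generating set sends $n$ to the number of conjugacy classes containing an element of word length at most $n$. Exponential means it is $\sim$-equivalent to $n\mapsto 2^n$, where $f\sim g$ iff $f\preccurlyeq g$ and $g\preccurlyeq f$, and $f\preccurlyeq g$ means there is $\lambda\in\mathbb{N}\setminus\{0\}$ with $f(n)\le\lambda g(\lambda n+\lambda)+\lambda$ for all $n$. *)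

theory Defs
  imports "HOL-Analysis.Analysis"
begin

type_synonym cantor = "nat \<Rightarrow> bool"

definition cantor_top :: "cantor topology" where
  "cantor_top = product_topology (\<lambda>_::nat. discrete_topology (UNIV::bool set)) UNIV"

definition prefix_app :: "bool list \<Rightarrow> cantor \<Rightarrow> cantor" where
  "prefix_app w y = (\<lambda>n. if n < length w then w ! n else y (n - length w))"

definition cone :: "bool list \<Rightarrow> cantor set" where
  "cone w = range (prefix_app w)"

definition maps_rigidly :: "(cantor \<Rightarrow> cantor) \<Rightarrow> bool list \<Rightarrow> bool list \<Rightarrow> bool" where
  "maps_rigidly v w1 w2 \<longleftrightarrow> (\<forall>y. v (prefix_app w1 y) = prefix_app w2 y)"

definition thompsonV :: "(cantor \<Rightarrow> cantor) set" where
  "thompsonV = {v. homeomorphic_map cantor_top cantor_top v \<and>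
      (\<forall>x. \<exists>w1 w2. x \<in> cone w1 \<and> maps_rigidly v w1 w2)}"

definition word_eval :: "(cantor \<Rightarrow> cantor) list \<Rightarrow> (cantor \<Rightarrow> cantor)" where
  "word_eval l = foldr (\<circ>) l id"

definition sym_gens :: "(cantor \<Rightarrow> cantor) set \<Rightarrow> (cantor \<Rightarrow> cantor) set" where
  "sym_gens S = S \<union> inv ` S"

definition generates_V :: "(cantor \<Rightarrow> cantor) set \<Rightarrow> bool" where
  "generates_V S \<longleftrightarrow> S \<subseteq> thompsonV \<and>
      thompsonV = {word_eval l | l. set l \<subseteq> sym_gens S}"

definition word_length :: "(cantor \<Rightarrow> cantor) set \<Rightarrow> (cantor \<Rightarrow> cantor) \<Rightarrow> nat" where
  "word_length S g = (LEAST n. \<exists>l. length l = n \<and> set l \<subseteq> sym_gens S \<and> word_eval l = g)"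

definition conj_class :: "(cantor \<Rightarrow> cantor) \<Rightarrow> (cantor \<Rightarrow> cantor) set" where
  "conj_class g = {k \<circ> g \<circ> inv k | k. k \<in> thompsonV}"

definition conj_growth :: "(cantor \<Rightarrow> cantor) set \<Rightarrow> nat \<Rightarrow> nat" where
  "conj_growth S n = card {conj_class g | g. g \<in> thompsonV \<and> word_length S g \<le> n}"

definition growth_le :: "(nat \<Rightarrow> nat) \<Rightarrow> (nat \<Rightarrow> nat) \<Rightarrow> bool" where
  "growth_le f g \<longleftrightarrow> (\<exists>c::nat. c > 0 \<and> (\<forall>n. f n \<le> c * g (c * n + c) + c))"

definition growth_equiv :: "(nat \<Rightarrow> nat) \<Rightarrow> (nat \<Rightarrow> nat) \<Rightarrow> bool" where
  "growth_equiv f g \<longleftrightarrow> growth_le f g \<and> growth_le g f"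

end

theory Submission
  imports Defs "HOL-Library.Sublist"
begin

text \<open>
  By compactness every element of V maps all cones of some fixed depth
  rigidly, so it matches the leaves of one caret tree with the leaves of another. Both trees
  can be moved to a vine (a right comb), and the leaves of a vine are permuted by swaps of
  cones; all of this is done by flip, tau, x0, its inverse and their copies acting on the
  cone 0C only, since conjugation by x0 turns the action on 0C into the action on 00C.

  There are at most (N + 1)^n words of length n in N letters, which gives the upper
  bound. For the lower bound, the set of minimal periods of periodic points is a conjugacy
  invariant. Acting on 0C only adds the period 1, and following the action on 0C by the flip
  of the first bit doubles all periods. Iterating these two operations along bit strings of
  length m yields 2^m elements with pairwise distinct period sets, each a word of length O(m).
\<close>

definition scons :: "bool \<Rightarrow> cantor \<Rightarrow> cantor" where
  "scons b x = case_nat b x"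

definition stl :: "cantor \<Rightarrow> cantor" where
  "stl x = x \<circ> Suc"

definition sdrop :: "nat \<Rightarrow> cantor \<Rightarrow> cantor" where
  "sdrop k x = (\<lambda>n. x (n + k))"

definition stake :: "nat \<Rightarrow> cantor \<Rightarrow> bool list" where
  "stake k x = map x [0..<k]"

lemma scons_0 [simp]: "scons b x 0 = b"
  by (simp add: scons_def)

lemma scons_Suc [simp]: "scons b x (Suc n) = x n"
  by (simp add: scons_def)

lemma stl_scons [simp]: "stl (scons b x) = x"
  by (simp add: stl_def scons_def comp_def)

lemma scons_stl [simp]: "scons (x 0) (stl x) = x"
  by (rule ext) (simp add: scons_def stl_def split: nat.split)

lemma scons_eq_iff [simp]: "scons a x = scons b y \<longleftrightarrow> a = b \<and> x = y"
proof
  assume "scons a x = scons b y"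
  then show "a = b \<and> x = y" by (metis scons_0 stl_scons)
qed simp

lemma scons_cases: obtains a y where "x = scons a y"
  by (rule that[of "x 0" "stl x"]) simp

lemma scons_cases2: obtains a b y where "x = scons a (scons b y)"
  by (rule that[of "x 0" "stl x 0" "stl (stl x)"]) simp

lemma prefix_app_Nil [simp]: "prefix_app [] y = y"
  by (simp add: prefix_app_def)

lemma prefix_app_Cons [simp]: "prefix_app (a # w) y = scons a (prefix_app w y)"
  by (rule ext) (auto simp: prefix_app_def scons_def split: nat.split)

lemma prefix_app_append: "prefix_app (u @ w) y = prefix_app u (prefix_app w y)"
  by (induction u) auto

lemma sdrop_prefix_app [simp]: "sdrop (length w) (prefix_app w y) = y"
  by (rule ext) (simp add: sdrop_def prefix_app_def)

lemma sdrop_0 [simp]: "sdrop 0 x = x"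
  by (simp add: sdrop_def)

lemma sdrop_Suc_scons [simp]: "sdrop (Suc n) (scons a y) = sdrop n y"
  by (rule ext) (simp add: sdrop_def)

lemma mem_cone_iff: "x \<in> cone w \<longleftrightarrow> (\<forall>i<length w. x i = w ! i)"
proof
  assume "x \<in> cone w"
  then show "\<forall>i<length w. x i = w ! i" by (auto simp: cone_def prefix_app_def)
next
  assume "\<forall>i<length w. x i = w ! i"
  then have "x = prefix_app w (sdrop (length w) x)"
    by (auto simp: prefix_app_def sdrop_def)
  then show "x \<in> cone w" unfolding cone_def by (metis rangeI)
qed

lemma cone_decomp: "x \<in> cone w \<Longrightarrow> x = prefix_app w (sdrop (length w) x)"
  by (rule ext) (auto simp: mem_cone_iff prefix_app_def sdrop_def)

lemma prefix_app_in_cone [simp]: "prefix_app w y \<in> cone w"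
  by (simp add: cone_def)

lemma mem_cone_Nil [simp]: "x \<in> cone []"
  by (simp add: mem_cone_iff)

lemma mem_cone_Cons [simp]: "x \<in> cone (a # w) \<longleftrightarrow> x 0 = a \<and> stl x \<in> cone w"
  by (auto simp: mem_cone_iff stl_def All_less_Suc2)

lemma stake_in_cone [simp]: "x \<in> cone (stake k x)"
  by (simp add: mem_cone_iff stake_def)

lemma length_stake [simp]: "length (stake k x) = k"
  by (simp add: stake_def)

lemma prefix_app_in_coneD: "prefix_app w y \<in> cone u \<Longrightarrow> prefix u w \<or> prefix w u"
proof (induction u arbitrary: w)
  case (Cons a u)
  then show ?case by (cases w) auto
qed simp

lemma prefix_app_in_cone_long:
  assumes "length u \<le> length w" "prefix_app w y \<in> cone u"
  shows "prefix u w"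
  using prefix_app_in_coneD[OF assms(2)] assms(1) prefix_length_le prefix_length_prefix by blast

lemma parallel_not_in_cone: "u \<parallel> w \<Longrightarrow> prefix_app w y \<notin> cone u"
  using prefix_app_in_coneD by blast

lemma maps_rigidly_append: "maps_rigidly v u w \<Longrightarrow> maps_rigidly v (u @ r) (w @ r)"
  by (simp add: maps_rigidly_def prefix_app_append)

lemma maps_rigidly_comp:
  "maps_rigidly f u v \<Longrightarrow> maps_rigidly g v w \<Longrightarrow> maps_rigidly (g \<circ> f) u w"
  by (simp add: maps_rigidly_def)

lemma maps_rigidly_id [simp]: "maps_rigidly id u u"
  by (simp add: maps_rigidly_def)

lemma maps_rigidly_inv: "bij g \<Longrightarrow> maps_rigidly g u w \<Longrightarrow> maps_rigidly (inv g) w u"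
  unfolding maps_rigidly_def by (metis bij_is_inj inv_f_f)

lemma maps_rigidly_reflect_prefix:
  assumes "inj v" "maps_rigidly v u w" "maps_rigidly v u' w'" "prefix w w'"
  shows "prefix u u' \<or> prefix u' u"
proof -
  obtain r where r: "w' = w @ r" using assms(4) by (rule prefixE)
  have "v (prefix_app u' y) = v (prefix_app u (prefix_app r y))" for y
    using assms(2,3) by (simp add: maps_rigidly_def r prefix_app_append)
  then have "prefix_app u' y \<in> cone u" for y
    using assms(1) by (metis injD prefix_app_in_cone)
  then show ?thesis using prefix_app_in_coneD by blast
qed

section \<open>Uniformly rigid maps\<close>

definition rigid_at_depth :: "(cantor \<Rightarrow> cantor) \<Rightarrow> nat \<Rightarrow> bool" where
  "rigid_at_depth v N \<longleftrightarrow> (\<forall>u. length u = N \<longrightarrow> (\<exists>w. maps_rigidly v u w))"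

definition uniformly_rigid :: "(cantor \<Rightarrow> cantor) \<Rightarrow> bool" where
  "uniformly_rigid v \<longleftrightarrow> (\<exists>N. rigid_at_depth v N)"

lemma rigid_at_depth_mono:
  assumes "rigid_at_depth v N" "N \<le> M"
  shows "rigid_at_depth v M"
  unfolding rigid_at_depth_def
proof (intro allI impI)
  fix u :: "bool list"
  assume "length u = M"
  then obtain w where "maps_rigidly v (take N u) w"
    using assms unfolding rigid_at_depth_def by (metis length_take min_absorb2)
  then have "maps_rigidly v (take N u @ drop N u) (w @ drop N u)" by (rule maps_rigidly_append)
  then show "\<exists>w. maps_rigidly v u w" by auto
qed

lemma uniformly_rigid_comp:
  assumes "uniformly_rigid a" "uniformly_rigid b"
  shows "uniformly_rigid (a \<circ> b)"
proof -
  obtain N1 N2 where N1: "rigid_at_depth b N1" and N2: "rigid_at_depth a N2"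
    using assms uniformly_rigid_def by blast
  have "rigid_at_depth (a \<circ> b) (N1 + N2)" unfolding rigid_at_depth_def
  proof (intro allI impI)
    fix u :: "bool list"
    assume u: "length u = N1 + N2"
    obtain w1 where "maps_rigidly b (take N1 u) w1"
      using N1 u unfolding rigid_at_depth_def by (metis length_take le_add1 min_absorb2)
    then have b: "maps_rigidly b u (w1 @ drop N1 u)"
      using maps_rigidly_append by (metis append_take_drop_id)
    have "rigid_at_depth a (length (w1 @ drop N1 u))"
      using rigid_at_depth_mono[OF N2] u by simp
    then obtain w2 where "maps_rigidly a (w1 @ drop N1 u) w2" unfolding rigid_at_depth_def by blast
    then show "\<exists>w. maps_rigidly (a \<circ> b) u w" using maps_rigidly_comp[OF b] by blast
  qed
  then show ?thesis unfolding uniformly_rigid_def by blast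
qed

lemma finite_words_of_length: "finite {u :: bool list. length u = N}"
  using finite_lists_length_eq[of "UNIV :: bool set" N] by simp

text \<open>The images of the finitely many cones of depth N have bounded length M, and every
  cone of depth M lies inside one of these images.\<close>
lemma uniformly_rigid_inv:
  assumes "bij v" "uniformly_rigid v"
  shows "uniformly_rigid (inv v)"
proof -
  obtain N where N: "rigid_at_depth v N" using assms(2) uniformly_rigid_def by blast
  define im where "im u = (SOME w. maps_rigidly v u w)" for u
  have im: "maps_rigidly v u (im u)" if "length u = N" for u
    using N that unfolding rigid_at_depth_def im_def by (metis someI_ex)
  define M where "M = Max ((\<lambda>u. length (im u)) ` {u. length u = N})"
  have M: "length (im u) \<le> M" if "length u = N" for u
    unfolding M_def using that finite_words_of_length by (intro Max_ge) auto
  have "rigid_at_depth (inv v) M" unfolding rigid_at_depth_def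
  proof (intro allI impI)
    fix w :: "bool list"
    assume w: "length w = M"
    define z where "z = inv v (prefix_app w (\<lambda>_. False))"
    define u where "u = stake N z"
    have z: "z = prefix_app u (sdrop N z)"
      unfolding u_def using cone_decomp[OF stake_in_cone[of z N]] by simp
    have lu: "length u = N" unfolding u_def by simp
    have "prefix_app w (\<lambda>_. False) = v z"
      unfolding z_def using assms(1) by (simp add: bij_is_surj surj_f_inv_f)
    also have "\<dots> = prefix_app (im u) (sdrop N z)"
      using im[OF lu] z unfolding maps_rigidly_def by metis
    finally have "prefix (im u) w"
      using prefix_app_in_cone_long M[OF lu] w by (metis prefix_app_in_cone)
    then obtain r where r: "w = im u @ r" by (rule prefixE)
    have "maps_rigidly (inv v) w (u @ r)"
      unfolding r by (rule maps_rigidly_inv[OF assms(1) maps_rigidly_append[OF im[OF lu]]])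
    then show "\<exists>u. maps_rigidly (inv v) w u" by blast
  qed
  then show ?thesis unfolding uniformly_rigid_def by blast
qed

lemma topspace_cantor_top [simp]: "topspace cantor_top = UNIV"
  by (simp add: cantor_top_def)

lemma compact_space_cantor_top: "compact_space cantor_top"
  unfolding cantor_top_def
  by (simp add: compact_space_product_topology compact_space_discrete_topology)

lemma openin_cylinder: "openin cantor_top {y. \<forall>i<K. y i = x i}"
proof (induction K)
  case 0
  then show ?case using openin_topspace[of cantor_top] by simp
next
  case (Suc K)
  have "openin cantor_top {y \<in> topspace cantor_top. y K \<in> {x K}}"
    unfolding cantor_top_def
    by (rule openin_continuous_map_preimage[OF continuous_map_product_projection]) auto
  moreover have "{y. \<forall>i<Suc K. y i = x i} = {y. \<forall>i<K. y i = x i} \<inter> {y. y K \<in> {x K}}"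
    by (auto simp: less_Suc_eq)
  ultimately show ?case using Suc by auto
qed

lemma openin_finitely_determined:
  assumes "\<And>x y. \<forall>i<K. x i = y i \<Longrightarrow> f x = f y"
  shows "openin cantor_top {x. f x \<in> A}"
proof -
  have "{x. f x \<in> A} = (\<Union>x\<in>{x. f x \<in> A}. {y. \<forall>i<K. y i = x i})"
  proof (intro equalityI subsetI)
    fix z
    assume "z \<in> (\<Union>x\<in>{x. f x \<in> A}. {y. \<forall>i<K. y i = x i})"
    then obtain x where "f x \<in> A" "\<forall>i<K. z i = x i" by blast
    then show "z \<in> {x. f x \<in> A}" using assms[of z x] by simp
  qed blast
  moreover have "openin cantor_top (\<Union>x\<in>{x. f x \<in> A}. {y. \<forall>i<K. y i = x i})"
    using openin_cylinder by blast
  ultimately show ?thesis by simp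
qed

lemma openin_cone: "openin cantor_top (cone w)"
proof -
  have "cone w = {x. (\<forall>i<length w. x i = w ! i) \<in> {True}}" by (auto simp: mem_cone_iff)
  also have "openin cantor_top \<dots>" by (rule openin_finitely_determined) auto
  finally show ?thesis .
qed

lemma uniformly_rigid_continuous:
  assumes "uniformly_rigid v"
  shows "continuous_map cantor_top cantor_top v"
proof -
  obtain N where N: "rigid_at_depth v N" using assms uniformly_rigid_def by blast
  have "v x k = v y k" if "\<forall>i<N + k + 1. x i = y i" for x y k
  proof -
    have same: "stake N x = stake N y" using that by (simp add: stake_def)
    obtain w where "maps_rigidly v (stake N x) w"
      using N length_stake unfolding rigid_at_depth_def by blast
    then have "v z = prefix_app w (sdrop N z)" if "z \<in> cone (stake N x)" for z
      using cone_decomp[OF that] unfolding maps_rigidly_def by (metis length_stake)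
    then have "v x = prefix_app w (sdrop N x)" "v y = prefix_app w (sdrop N y)"
      using same stake_in_cone by metis+
    then show ?thesis using that by (simp add: prefix_app_def sdrop_def)
  qed
  then have "openin cantor_top {x. v x k \<in> U}" for k U
    by (intro openin_finitely_determined) blast
  then have "continuous_map cantor_top (discrete_topology UNIV) (\<lambda>x. v x k)" for k
    by (simp add: continuous_map_def)
  then show ?thesis unfolding cantor_top_def
    using continuous_map_componentwise_UNIV by blast
qed

text \<open>Compactness: finitely many of the rigidly mapped cones cover the Cantor space, and their
  maximal depth works uniformly.\<close>
lemma locally_rigid_imp_uniformly_rigid:
  assumes "\<forall>x. \<exists>w1 w2. x \<in> cone w1 \<and> maps_rigidly v w1 w2"
  shows "uniformly_rigid v"
proof -
  let ?U = "cone ` {w. \<exists>w2. maps_rigidly v w w2}"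
  have "compactin cantor_top UNIV"
    using compact_space_cantor_top unfolding compact_space_def by simp
  moreover have "\<forall>C\<in>?U. openin cantor_top C" using openin_cone by auto
  moreover have "UNIV \<subseteq> \<Union>?U" using assms by blast
  ultimately obtain F where F: "finite F" "F \<subseteq> ?U" "UNIV \<subseteq> \<Union>F"
    unfolding compactin_def by (meson order_refl)
  obtain Fw where Fw: "Fw \<subseteq> {w. \<exists>w2. maps_rigidly v w w2}" "F = cone ` Fw" "finite Fw"
    using F(1,2) finite_subset_image by metis
  define N where "N = Max (length ` Fw)"
  have "rigid_at_depth v N" unfolding rigid_at_depth_def
  proof (intro allI impI)
    fix u :: "bool list"
    assume u: "length u = N"
    obtain w where w: "w \<in> Fw" "prefix_app u (\<lambda>_. False) \<in> cone w" using F(3) Fw(2) by blast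
    have "length w \<le> N" unfolding N_def using Fw(3) w(1) by (intro Max_ge) auto
    then have "prefix w u" using prefix_app_in_cone_long w(2) u by blast
    then obtain r where "u = w @ r" by (rule prefixE)
    moreover obtain w2 where "maps_rigidly v w w2" using Fw(1) w(1) by blast
    ultimately show "\<exists>w. maps_rigidly v u w" using maps_rigidly_append by blast
  qed
  then show ?thesis unfolding uniformly_rigid_def by blast
qed

lemma uniformly_rigid_imp_locally_rigid:
  assumes "uniformly_rigid v"
  shows "\<exists>w1 w2. x \<in> cone w1 \<and> maps_rigidly v w1 w2"
  using assms stake_in_cone length_stake unfolding uniformly_rigid_def rigid_at_depth_def by blast

lemma thompsonV_iff: "v \<in> thompsonV \<longleftrightarrow> bij v \<and> uniformly_rigid v"
proof
  assume v: "v \<in> thompsonV"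
  then have "homeomorphic_map cantor_top cantor_top v" unfolding thompsonV_def by simp
  then have "bij v"
    using homeomorphic_imp_surjective_map homeomorphic_imp_injective_map bij_def by fastforce
  then show "bij v \<and> uniformly_rigid v"
    using v locally_rigid_imp_uniformly_rigid unfolding thompsonV_def by blast
next
  assume v: "bij v \<and> uniformly_rigid v"
  then have "homeomorphic_maps cantor_top cantor_top v (inv v)"
    unfolding homeomorphic_maps_def
    using uniformly_rigid_continuous uniformly_rigid_inv
    by (simp add: bij_is_inj bij_is_surj surj_f_inv_f)
  then show "v \<in> thompsonV"
    unfolding thompsonV_def using v homeomorphic_map_maps uniformly_rigid_imp_locally_rigid by blast
qed

lemma id_in_thompsonV: "id \<in> thompsonV"
  unfolding thompsonV_iff uniformly_rigid_def rigid_at_depth_def using maps_rigidly_id by blast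

lemma comp_in_thompsonV: "f \<in> thompsonV \<Longrightarrow> g \<in> thompsonV \<Longrightarrow> f \<circ> g \<in> thompsonV"
  unfolding thompsonV_iff using bij_comp uniformly_rigid_comp by blast

lemma inv_in_thompsonV: "f \<in> thompsonV \<Longrightarrow> inv f \<in> thompsonV"
  unfolding thompsonV_iff using bij_imp_bij_inv uniformly_rigid_inv by blast

definition generated :: "(cantor \<Rightarrow> cantor) set \<Rightarrow> (cantor \<Rightarrow> cantor) set" where
  "generated S = {word_eval l | l. set l \<subseteq> sym_gens S}"

lemma word_eval_Nil [simp]: "word_eval [] = id"
  by (simp add: word_eval_def)

lemma word_eval_Cons [simp]: "word_eval (a # l) = a \<circ> word_eval l"
  by (simp add: word_eval_def)

lemma word_eval_append: "word_eval (l1 @ l2) = word_eval l1 \<circ> word_eval l2"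
  by (induction l1) (simp_all add: comp_assoc)

lemma generated_induct [consumes 1, case_names id step]:
  assumes "g \<in> generated S"
    and "P id"
    and "\<And>s g. s \<in> sym_gens S \<Longrightarrow> g \<in> generated S \<Longrightarrow> P g \<Longrightarrow> P (s \<circ> g)"
  shows "P g"
proof -
  have "set l \<subseteq> sym_gens S \<Longrightarrow> P (word_eval l)" for l
  proof (induction l)
    case (Cons s l)
    then have "word_eval l \<in> generated S" "P (word_eval l)" by (auto simp: generated_def)
    then show ?case using assms(3) Cons.prems by (simp only: word_eval_Cons set_simps insert_subset)
  qed (simp add: assms(2))
  then show ?thesis using assms(1) unfolding generated_def by blast
qed

lemma id_in_generated: "id \<in> generated S"
  unfolding generated_def by (rule CollectI, rule exI[of _ "[]"]) simp

lemma comp_in_generated: "f \<in> generated S \<Longrightarrow> g \<in> generated S \<Longrightarrow> f \<circ> g \<in> generated S"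
  unfolding generated_def
proof clarify
  fix l1 l2
  assume "set l1 \<subseteq> sym_gens S" "set l2 \<subseteq> sym_gens S"
  then show "\<exists>l. word_eval l1 \<circ> word_eval l2 = word_eval l \<and> set l \<subseteq> sym_gens S"
    by (intro exI[of _ "l1 @ l2"]) (simp add: word_eval_append)
qed

lemma sym_gens_in_generated: "s \<in> sym_gens S \<Longrightarrow> s \<in> generated S"
  unfolding generated_def by (rule CollectI, rule exI[of _ "[s]"]) simp

lemma gens_in_generated: "s \<in> S \<Longrightarrow> s \<in> generated S"
  by (simp add: sym_gens_in_generated sym_gens_def)

lemma sym_gens_bij_inv:
  assumes "\<forall>t\<in>S. bij t" "s \<in> sym_gens S"
  shows "bij s" "inv s \<in> sym_gens S"
  using assms by (auto simp: sym_gens_def bij_imp_bij_inv bij_is_inj bij_is_surj inv_inv_eq)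

lemma bij_generated:
  assumes "\<forall>t\<in>S. bij t" "g \<in> generated S"
  shows "bij g"
  using assms(2)
proof (induction rule: generated_induct)
  case (step s g)
  then show ?case using bij_comp sym_gens_bij_inv(1)[OF assms(1)] by blast
qed (rule bij_id)

lemma inv_in_generated:
  assumes "\<forall>t\<in>S. bij t" "g \<in> generated S"
  shows "inv g \<in> generated S"
  using assms(2)
proof (induction rule: generated_induct)
  case (step s g)
  have "inv (s \<circ> g) = inv g \<circ> inv s"
    using o_inv_distrib sym_gens_bij_inv(1)[OF assms(1) step(1)] bij_generated[OF assms(1) step(2)]
    by blast
  then show ?case
    using step comp_in_generated sym_gens_in_generated sym_gens_bij_inv(2)[OF assms(1)] by metis
qed (simp only: inv_id id_in_generated)


lemma subset_thompsonV_generated: "S \<subseteq> thompsonV \<Longrightarrow> generated S \<subseteq> thompsonV"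
proof
  fix g
  assume S: "S \<subseteq> thompsonV"
  assume "g \<in> generated S"
  then show "g \<in> thompsonV"
  proof (induction rule: generated_induct)
    case (step s g)
    then have "s \<in> thompsonV" using S inv_in_thompsonV by (auto simp: sym_gens_def)
    then show ?case using step comp_in_thompsonV by blast
  qed (rule id_in_thompsonV)
qed

definition flip :: "cantor \<Rightarrow> cantor" where
  "flip x = scons (\<not> x 0) (stl x)"

definition on_left :: "(cantor \<Rightarrow> cantor) \<Rightarrow> cantor \<Rightarrow> cantor" where
  "on_left g x = (if x 0 then x else scons False (g (stl x)))"

definition on_right :: "(cantor \<Rightarrow> cantor) \<Rightarrow> cantor \<Rightarrow> cantor" where
  "on_right g x = (if x 0 then scons True (g (stl x)) else x)"

definition swap_cones :: "bool list \<Rightarrow> bool list \<Rightarrow> cantor \<Rightarrow> cantor" where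
  "swap_cones a b x =
    (if x \<in> cone a then prefix_app b (sdrop (length a) x)
     else if x \<in> cone b then prefix_app a (sdrop (length b) x) else x)"

definition tau :: "cantor \<Rightarrow> cantor" where
  "tau = swap_cones [False] [True, False]"

text \<open>The generator x0 of Thompson's group F: 00y \<mapsto> 0y, 01y \<mapsto> 10y, 1y \<mapsto> 11y.\<close>
definition x0 :: "cantor \<Rightarrow> cantor" where
  "x0 x = (if x 0 then scons True x
    else if stl x 0 then scons True (scons False (stl (stl x))) else stl x)"

definition x0_inv :: "cantor \<Rightarrow> cantor" where
  "x0_inv x = (if \<not> x 0 then scons False x
    else if \<not> stl x 0 then scons False (scons True (stl (stl x))) else stl x)"

lemma flip_scons [simp]: "flip (scons a y) = scons (\<not> a) y"
  by (simp add: flip_def)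

lemma on_left_scons [simp]:
  "on_left g (scons False y) = scons False (g y)"
  "on_left g (scons True y) = scons True y"
  by (simp_all add: on_left_def)

lemma on_right_scons [simp]:
  "on_right g (scons False y) = scons False y"
  "on_right g (scons True y) = scons True (g y)"
  by (simp_all add: on_right_def)

lemma x0_scons [simp]:
  "x0 (scons False (scons False y)) = scons False y"
  "x0 (scons False (scons True y)) = scons True (scons False y)"
  "x0 (scons True y) = scons True (scons True y)"
  by (simp_all add: x0_def)

lemma x0_inv_scons [simp]:
  "x0_inv (scons False y) = scons False (scons False y)"
  "x0_inv (scons True (scons False y)) = scons False (scons True y)"
  "x0_inv (scons True (scons True y)) = scons True y"
  by (simp_all add: x0_inv_def)

lemma maps_rigidly_on_left:
  "maps_rigidly g u w \<Longrightarrow> maps_rigidly (on_left g) (False # u) (False # w)"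
  "maps_rigidly (on_left g) (True # u) (True # u)"
  by (simp_all add: maps_rigidly_def)

lemma maps_rigidly_on_right:
  "maps_rigidly g u w \<Longrightarrow> maps_rigidly (on_right g) (True # u) (True # w)"
  "maps_rigidly (on_right g) (False # u) (False # u)"
  by (simp_all add: maps_rigidly_def)

lemma flip_flip: "flip \<circ> flip = id"
  by (rule ext) (simp add: flip_def)

lemma x0_inv_x0: "x0_inv \<circ> x0 = id"
proof
  fix x :: cantor
  obtain a b y where "x = scons a (scons b y)" by (rule scons_cases2)
  then show "(x0_inv \<circ> x0) x = id x" by (cases a; cases b) simp_all
qed

lemma x0_x0_inv: "x0 \<circ> x0_inv = id"
proof
  fix x :: cantor
  obtain a b y where "x = scons a (scons b y)" by (rule scons_cases2)
  then show "(x0 \<circ> x0_inv) x = id x" by (cases a; cases b) simp_all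
qed

lemma on_left_comp: "on_left (f \<circ> g) = on_left f \<circ> on_left g"
proof
  fix x :: cantor
  obtain a y where "x = scons a y" by (rule scons_cases)
  then show "on_left (f \<circ> g) x = (on_left f \<circ> on_left g) x" by (cases a) simp_all
qed

lemma on_left_id: "on_left id = id"
proof
  fix x :: cantor
  obtain a y where "x = scons a y" by (rule scons_cases)
  then show "on_left id x = id x" by (cases a) simp_all
qed

lemma on_right_conv_on_left: "on_right g = flip \<circ> on_left g \<circ> flip"
proof
  fix x :: cantor
  obtain a y where "x = scons a y" by (rule scons_cases)
  then show "on_right g x = (flip \<circ> on_left g \<circ> flip) x" by (cases a) simp_all
qed

text \<open>This conjugation lets finitely many generators produce on_left of every element.\<close>
lemma on_left_on_left: "on_left (on_left g) = x0_inv \<circ> on_left g \<circ> x0"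
proof
  fix x :: cantor
  obtain a b y where "x = scons a (scons b y)" by (rule scons_cases2)
  then show "on_left (on_left g) x = (x0_inv \<circ> on_left g \<circ> x0) x" by (cases a; cases b) simp_all
qed

lemma
  assumes "bij g"
  shows bij_on_left: "bij (on_left g)" and inv_on_left: "inv (on_left g) = on_left (inv g)"
proof -
  have "on_left g \<circ> on_left (inv g) = id" "on_left (inv g) \<circ> on_left g = id"
    using assms by (simp_all add: on_left_comp[symmetric] on_left_id bij_is_inj bij_is_surj
        surj_iff[THEN iffD1] inj_iff[THEN iffD1])
  then show "bij (on_left g)" "inv (on_left g) = on_left (inv g)"
    using o_bij inv_unique_comp by blast+
qed

lemma swap_cones_involution:
  assumes "a \<parallel> b"
  shows "swap_cones a b \<circ> swap_cones a b = id"
proof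
  fix x
  have "b \<parallel> a" using assms parallel_commute by blast
  then show "(swap_cones a b \<circ> swap_cones a b) x = id x"
    using assms cone_decomp[of x a] cone_decomp[of x b]
    by (auto simp: swap_cones_def dest: parallel_not_in_cone)
qed

lemma bij_swap_cones: "a \<parallel> b \<Longrightarrow> bij (swap_cones a b)"
  using swap_cones_involution o_bij by blast

definition base_gens :: "(cantor \<Rightarrow> cantor) set" where
  "base_gens = {flip, tau, x0, x0_inv}"

definition thompson_gens :: "(cantor \<Rightarrow> cantor) set" where
  "thompson_gens = base_gens \<union> on_left ` base_gens"

lemma finite_thompson_gens: "finite thompson_gens"
  by (simp add: thompson_gens_def base_gens_def)

lemma bij_base_gens: "t \<in> base_gens \<Longrightarrow> bij t"
  unfolding base_gens_def tau_def
  using o_bij[OF flip_flip flip_flip] o_bij[OF x0_inv_x0 x0_x0_inv] o_bij[OF x0_x0_inv x0_inv_x0]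
    bij_swap_cones[of "[False]" "[True, False]"]
  by (auto simp: parallel_def)

lemma bij_thompson_gens: "\<forall>t\<in>thompson_gens. bij t"
  unfolding thompson_gens_def using bij_base_gens bij_on_left by auto

lemma base_gens_in_generated:
  "flip \<in> generated thompson_gens" "tau \<in> generated thompson_gens"
  "x0 \<in> generated thompson_gens" "x0_inv \<in> generated thompson_gens"
  by (simp_all add: gens_in_generated thompson_gens_def base_gens_def)

lemma on_left_in_generated:
  assumes "g \<in> generated thompson_gens"
  shows "on_left g \<in> generated thompson_gens"
  using assms
proof (induction rule: generated_induct)
  case id
  then show ?case by (simp only: on_left_id id_in_generated)
next
  case (step s g)
  have gen: "on_left t \<in> generated thompson_gens" if t: "t \<in> thompson_gens" for t
  proof (cases "t \<in> base_gens")
    case True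
    then show ?thesis by (simp add: gens_in_generated thompson_gens_def)
  next
    case False
    then obtain t0 where t0: "t0 \<in> base_gens" "t = on_left t0"
      using t unfolding thompson_gens_def by blast
    have "on_left t0 \<in> generated thompson_gens"
      using t0(1) by (simp add: gens_in_generated thompson_gens_def)
    then show ?thesis
      unfolding t0(2) on_left_on_left by (intro comp_in_generated base_gens_in_generated)
  qed
  have "on_left s \<in> generated thompson_gens"
  proof (cases "s \<in> thompson_gens")
    case True
    then show ?thesis using gen by blast
  next
    case False
    then obtain t where "t \<in> thompson_gens" "s = inv t" using step(1) unfolding sym_gens_def by blast
    then show ?thesis
      using gen inv_on_left bij_thompson_gens inv_in_generated[OF bij_thompson_gens] by metis
  qed
  then show ?case using step comp_in_generated by (simp only: on_left_comp)
qed

lemma on_right_in_generated: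
  "g \<in> generated thompson_gens \<Longrightarrow> on_right g \<in> generated thompson_gens"
  unfolding on_right_conv_on_left
  by (intro comp_in_generated on_left_in_generated base_gens_in_generated)

lemma bij_generated_thompson_gens: "g \<in> generated thompson_gens \<Longrightarrow> bij g"
  using bij_generated[OF bij_thompson_gens] .

lemma inv_in_generated_thompson_gens:
  "g \<in> generated thompson_gens \<Longrightarrow> inv g \<in> generated thompson_gens"
  using inv_in_generated[OF bij_thompson_gens] .

lemma rigid_at_depth_2I:
  assumes "\<And>a b. \<exists>w. maps_rigidly f [a, b] w"
  shows "rigid_at_depth f 2"
  unfolding rigid_at_depth_def
proof (intro allI impI)
  fix u :: "bool list"
  assume "length u = 2"
  then obtain a b where "u = [a, b]" by (auto simp: length_Suc_conv numeral_2_eq_2)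
  then show "\<exists>w. maps_rigidly f u w" using assms by blast
qed

lemma uniformly_rigid_base_gens: "t \<in> base_gens \<Longrightarrow> uniformly_rigid t"
proof -
  have "rigid_at_depth flip 2"
  proof (rule rigid_at_depth_2I)
    fix a b
    show "\<exists>w. maps_rigidly flip [a, b] w"
      by (rule exI[of _ "[\<not> a, b]"]) (simp add: maps_rigidly_def)
  qed
  moreover have "rigid_at_depth tau 2"
  proof (rule rigid_at_depth_2I)
    fix a b
    show "\<exists>w. maps_rigidly tau [a, b] w"
      by (rule exI[of _ "if a then (if b then [True, True] else [False]) else [True, False, b]"])
        (cases a; cases b; simp add: maps_rigidly_def tau_def swap_cones_def)
  qed
  moreover have "rigid_at_depth x0 2"
  proof (rule rigid_at_depth_2I)
    fix a b
    show "\<exists>w. maps_rigidly x0 [a, b] w"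
      by (rule exI[of _ "if a then [True, True, b] else (if b then [True, False] else [False])"])
        (cases a; cases b; simp add: maps_rigidly_def)
  qed
  moreover have "rigid_at_depth x0_inv 2"
  proof (rule rigid_at_depth_2I)
    fix a b
    show "\<exists>w. maps_rigidly x0_inv [a, b] w"
      by (rule exI[of _ "if a then (if b then [True] else [False, True]) else [False, False, b]"])
        (cases a; cases b; simp add: maps_rigidly_def)
  qed
  ultimately show "t \<in> base_gens \<Longrightarrow> uniformly_rigid t"
    unfolding base_gens_def uniformly_rigid_def by blast
qed

lemma uniformly_rigid_on_left:
  assumes "uniformly_rigid g"
  shows "uniformly_rigid (on_left g)"
proof -
  obtain N where N: "rigid_at_depth g N" using assms uniformly_rigid_def by blast
  have "rigid_at_depth (on_left g) (Suc N)" unfolding rigid_at_depth_def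
  proof (intro allI impI)
    fix u :: "bool list"
    assume "length u = Suc N"
    then obtain a u' where u: "u = a # u'" "length u' = N" by (auto simp: length_Suc_conv)
    show "\<exists>w. maps_rigidly (on_left g) u w"
    proof (cases a)
      case True
      then show ?thesis using u(1) maps_rigidly_on_left(2)[of g u'] by auto
    next
      case False
      obtain w where "maps_rigidly g u' w" using N u(2) unfolding rigid_at_depth_def by blast
      then show ?thesis using u(1) False maps_rigidly_on_left(1) by auto
    qed
  qed
  then show ?thesis unfolding uniformly_rigid_def by blast
qed

lemma thompson_gens_subset_thompsonV: "thompson_gens \<subseteq> thompsonV"
  unfolding thompson_gens_def
  using bij_base_gens uniformly_rigid_base_gens bij_on_left uniformly_rigid_on_left
  by (auto simp: thompsonV_iff)

section \<open>Caret trees and tree pair diagrams\<close>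

datatype caret_tree = Leaf | Caret caret_tree caret_tree

fun leaves :: "caret_tree \<Rightarrow> bool list list" where
  "leaves Leaf = [[]]"
| "leaves (Caret s t) = map (Cons False) (leaves s) @ map (Cons True) (leaves t)"

fun vine :: "nat \<Rightarrow> caret_tree" where
  "vine 0 = Leaf"
| "vine (Suc k) = Caret Leaf (vine k)"

lemma length_leaves_pos: "0 < length (leaves t)"
  by (induction t) auto

lemma distinct_leaves: "distinct (leaves t)"
  by (induction t) (auto simp: distinct_map)

lemma leaves_prefix_free:
  "u \<in> set (leaves t) \<Longrightarrow> w \<in> set (leaves t) \<Longrightarrow> prefix u w \<Longrightarrow> u = w"
  by (induction t arbitrary: u w) auto

lemma leaves_parallel: "u \<in> set (leaves t) \<Longrightarrow> w \<in> set (leaves t) \<Longrightarrow> u \<noteq> w \<Longrightarrow> u \<parallel> w"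
  using leaves_prefix_free by (metis parallelI)

text \<open>g is described by the tree pair diagram (s, t) whose leaves are matched in order.\<close>
definition maps_leaves :: "(cantor \<Rightarrow> cantor) \<Rightarrow> caret_tree \<Rightarrow> caret_tree \<Rightarrow> bool" where
  "maps_leaves g s t \<longleftrightarrow> list_all2 (maps_rigidly g) (leaves s) (leaves t)"

lemma maps_leaves_id: "maps_leaves id t t"
  by (simp add: maps_leaves_def list_all2_same)

lemma maps_leaves_comp: "maps_leaves f s t \<Longrightarrow> maps_leaves g t u \<Longrightarrow> maps_leaves (g \<circ> f) s u"
  unfolding maps_leaves_def by (rule list_all2_trans[OF maps_rigidly_comp])

lemma maps_leaves_inv: "bij g \<Longrightarrow> maps_leaves g s t \<Longrightarrow> maps_leaves (inv g) t s"
  unfolding maps_leaves_def list_all2_conv_all_nth by (simp add: maps_rigidly_inv)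

lemma maps_leaves_on_left: "maps_leaves g s t \<Longrightarrow> maps_leaves (on_left g) (Caret s r) (Caret t r)"
  unfolding maps_leaves_def
  by (auto intro!: list_all2_appendI simp: list_all2_map1 list_all2_map2 list_all2_same
      maps_rigidly_on_left elim!: list_all2_mono)

lemma maps_leaves_on_right: "maps_leaves g s t \<Longrightarrow> maps_leaves (on_right g) (Caret r s) (Caret r t)"
  unfolding maps_leaves_def
  by (auto intro!: list_all2_appendI simp: list_all2_map1 list_all2_map2 list_all2_same
      maps_rigidly_on_right elim!: list_all2_mono)

lemma maps_leaves_x0: "maps_leaves x0 (Caret (Caret a b) c) (Caret a (Caret b c))"
  unfolding maps_leaves_def
  by (auto intro!: list_all2_appendI simp: list_all2_map1 list_all2_map2 list_all2_same
      maps_rigidly_def)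

lemma maps_leaves_vine_join:
  "\<exists>h\<in>generated thompson_gens. maps_leaves h (Caret (vine p) (vine q)) (vine (Suc (p + q)))"
proof (induction p)
  case 0
  show ?case using maps_leaves_id id_in_generated by fastforce
next
  case (Suc p)
  then obtain h where h: "h \<in> generated thompson_gens"
    "maps_leaves h (Caret (vine p) (vine q)) (vine (Suc (p + q)))" by blast
  have "maps_leaves (on_right h \<circ> x0) (Caret (vine (Suc p)) (vine q)) (vine (Suc (Suc p + q)))"
    using maps_leaves_comp[OF maps_leaves_x0 maps_leaves_on_right[OF h(2)]] by simp
  moreover have "on_right h \<circ> x0 \<in> generated thompson_gens"
    using h(1) by (intro comp_in_generated on_right_in_generated base_gens_in_generated)
  ultimately show ?case by blast
qed

lemma maps_leaves_to_vine:
  "\<exists>g\<in>generated thompson_gens. maps_leaves g t (vine (length (leaves t) - 1))"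
proof (induction t)
  case Leaf
  show ?case using maps_leaves_id id_in_generated by fastforce
next
  case (Caret a b)
  define p q where "p = length (leaves a) - 1" and "q = length (leaves b) - 1"
  obtain ga gb where ga: "ga \<in> generated thompson_gens" "maps_leaves ga a (vine p)"
    and gb: "gb \<in> generated thompson_gens" "maps_leaves gb b (vine q)"
    using Caret.IH p_def q_def by blast
  obtain h where h: "h \<in> generated thompson_gens"
    "maps_leaves h (Caret (vine p) (vine q)) (vine (Suc (p + q)))"
    using maps_leaves_vine_join by blast
  have "maps_leaves (h \<circ> (on_left ga \<circ> on_right gb)) (Caret a b) (vine (Suc (p + q)))"
    using maps_leaves_on_right[OF gb(2)] maps_leaves_on_left[OF ga(2)] h(2)
    by (blast intro: maps_leaves_comp)
  moreover have "h \<circ> (on_left ga \<circ> on_right gb) \<in> generated thompson_gens"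
    using h(1) ga(1) gb(1) by (intro comp_in_generated on_left_in_generated on_right_in_generated)
  moreover have "length (leaves (Caret a b)) - 1 = Suc (p + q)"
    using length_leaves_pos[of a] length_leaves_pos[of b] unfolding p_def q_def
    by (simp only: leaves.simps length_append length_map)
  ultimately show ?case by metis
qed

definition sends_leaves :: "(cantor \<Rightarrow> cantor) \<Rightarrow> caret_tree \<Rightarrow> caret_tree \<Rightarrow> bool" where
  "sends_leaves g s t \<longleftrightarrow> (\<forall>u\<in>set (leaves s). \<exists>w\<in>set (leaves t). maps_rigidly g u w)"

lemma maps_leaves_imp_sends_leaves: "maps_leaves g s t \<Longrightarrow> sends_leaves g s t"
  unfolding maps_leaves_def sends_leaves_def
  by (metis in_set_conv_nth list_all2_conv_all_nth)

lemma sends_leaves_comp: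
  "sends_leaves f s t \<Longrightarrow> sends_leaves g t u \<Longrightarrow> sends_leaves (g \<circ> f) s u"
  unfolding sends_leaves_def using maps_rigidly_comp by metis

lemma swap_cones_Nil_eq_flip: "swap_cones [False] [True] = flip"
proof
  fix x :: cantor
  obtain a y where "x = scons a y" by (rule scons_cases)
  then show "swap_cones [False] [True] x = flip x" by (cases a) (simp_all add: swap_cones_def)
qed

lemma swap_cones_Cons_True:
  "swap_cones [False] (True # True # u) =
    on_right (swap_cones [False] (True # u)) \<circ> tau \<circ> on_right (swap_cones [False] (True # u))"
proof
  fix x :: cantor
  obtain a b y where x: "x = scons a (scons b y)" by (rule scons_cases2)
  show "swap_cones [False] (True # True # u) x =
    (on_right (swap_cones [False] (True # u)) \<circ> tau \<circ> on_right (swap_cones [False] (True # u))) x"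
  proof (cases "a \<and> b \<and> y \<in> cone u")
    case True
    then show ?thesis unfolding x
      by (subst (1 2) cone_decomp[of y u]) (simp_all add: swap_cones_def tau_def)
  next
    case False
    then show ?thesis unfolding x by (cases a; cases b) (auto simp: swap_cones_def tau_def)
  qed
qed

lemma swap_vine_leaf_in_generated:
  "u \<in> set (leaves (vine k)) \<Longrightarrow> swap_cones [False] (True # u) \<in> generated thompson_gens"
proof (induction k arbitrary: u)
  case 0
  then show ?case using swap_cones_Nil_eq_flip base_gens_in_generated by simp
next
  case (Suc k)
  then consider "u = [False]" | u' where "u = True # u'" "u' \<in> set (leaves (vine k))" by auto
  then show ?case
  proof cases
    case 1
    then show ?thesis using base_gens_in_generated by (simp add: tau_def)
  next
    case 2
    then show ?thesis unfolding 2(1) swap_cones_Cons_True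
      using Suc.IH by (intro comp_in_generated on_right_in_generated base_gens_in_generated) simp_all
  qed
qed

lemma maps_rigidly_swap_cones:
  assumes "a \<parallel> b"
  shows "maps_rigidly (swap_cones a b) a b" "maps_rigidly (swap_cones a b) b a"
  using assms by (auto simp: maps_rigidly_def swap_cones_def dest: parallel_not_in_cone)

lemma sends_leaves_swap_cones:
  assumes "a \<in> set (leaves t)" "b \<in> set (leaves t)" "a \<noteq> b"
  shows "sends_leaves (swap_cones a b) t t"
  unfolding sends_leaves_def
proof
  fix z
  assume z: "z \<in> set (leaves t)"
  have "maps_rigidly (swap_cones a b) a b" "maps_rigidly (swap_cones a b) b a"
    using leaves_parallel assms maps_rigidly_swap_cones by blast+
  moreover have "maps_rigidly (swap_cones a b) z z" if "z \<noteq> a" "z \<noteq> b"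
    using leaves_parallel[OF _ z] assms that parallel_commute
    by (auto simp: maps_rigidly_def swap_cones_def dest: parallel_not_in_cone)
  ultimately show "\<exists>w\<in>set (leaves t). maps_rigidly (swap_cones a b) z w"
    using assms z by blast
qed

lemma bij_on_rightD:
  assumes "bij (on_right h)"
  shows "bij h"
proof (rule bijI)
  show "inj h"
  proof (rule injI)
    fix a b
    assume "h a = h b"
    then have "on_right h (scons True a) = on_right h (scons True b)" by simp
    then have "scons True a = scons True b" by (rule injD[OF bij_is_inj[OF assms]])
    then show "a = b" by simp
  qed
  show "surj h" unfolding surj_def
  proof
    fix z
    obtain x where x: "scons True z = on_right h x" using bij_is_surj[OF assms] by (rule surjE)
    obtain c y where "x = scons c y" by (rule scons_cases)
    with x show "\<exists>y. z = h y" by (cases c) auto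
  qed
qed

lemma fixing_left_cone_eq_on_right:
  assumes "bij g" "maps_rigidly g [False] [False]"
  shows "g = on_right (\<lambda>y. stl (g (scons True y)))"
proof
  fix x
  have gF: "g (scons False y) = scons False y" for y using assms(2) by (simp add: maps_rigidly_def)
  have "g (scons True y) 0" for y
  proof (rule ccontr)
    assume "\<not> g (scons True y) 0"
    then have "g (scons True y) = scons False (stl (g (scons True y)))"
      using scons_stl[of "g (scons True y)"] by simp
    also have "\<dots> = g (scons False (stl (g (scons True y))))" using gF by simp
    finally have "scons True y = scons False (stl (g (scons True y)))"
      by (rule injD[OF bij_is_inj[OF assms(1)]])
    then show False by simp
  qed
  then have gT: "g (scons True y) = scons True (stl (g (scons True y)))" for y
    using scons_stl[of "g (scons True y)"] by simp
  obtain a y where "x = scons a y" by (rule scons_cases)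
  then show "g x = on_right (\<lambda>y. stl (g (scons True y))) x" using gF gT by (cases a) simp_all
qed

lemma sends_leaves_on_right_vine:
  assumes "sends_leaves (on_right h) (vine (Suc k)) (vine (Suc k))"
  shows "sends_leaves h (vine k) (vine k)"
  unfolding sends_leaves_def
proof
  fix z
  assume "z \<in> set (leaves (vine k))"
  then obtain w where w: "w \<in> set (leaves (vine (Suc k)))" "maps_rigidly (on_right h) (True # z) w"
    using assms unfolding sends_leaves_def by auto
  have "w \<noteq> [False]"
  proof
    assume "w = [False]"
    then have "scons True (h (prefix_app z y)) = scons False y" for y
      using w(2) by (simp add: maps_rigidly_def)
    then show False by simp
  qed
  then obtain w' where "w = True # w'" "w' \<in> set (leaves (vine k))" using w(1) by auto
  then show "\<exists>w\<in>set (leaves (vine k)). maps_rigidly h z w"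
    using w(2) by (auto simp: maps_rigidly_def)
qed

lemma on_right_if_fixes_left_leaf:
  assumes "bij g" "sends_leaves g (vine (Suc k)) (vine (Suc k))" "maps_rigidly g [False] [False]"
  obtains h where "g = on_right h" "bij h" "sends_leaves h (vine k) (vine k)"
proof -
  define h where "h y = stl (g (scons True y))" for y
  have g: "g = on_right h" unfolding h_def using fixing_left_cone_eq_on_right assms(1,3) by blast
  then have "bij h" "sends_leaves h (vine k) (vine k)"
    using assms(1,2) bij_on_rightD sends_leaves_on_right_vine by blast+
  then show ?thesis using that g by blast
qed

lemma swap_cones_vine_leaf:
  assumes "w \<in> set (leaves (vine (Suc k)))" "w \<noteq> [False]"
  shows "swap_cones [False] w \<in> generated thompson_gens" "bij (swap_cones [False] w)"
    "sends_leaves (swap_cones [False] w) (vine (Suc k)) (vine (Suc k))"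
    "maps_rigidly (swap_cones [False] w) w [False]"
proof -
  obtain u where "w = True # u" "u \<in> set (leaves (vine k))" using assms by auto
  then show "swap_cones [False] w \<in> generated thompson_gens"
    using swap_vine_leaf_in_generated by simp
  then show "bij (swap_cones [False] w)" by (rule bij_generated_thompson_gens)
  show "sends_leaves (swap_cones [False] w) (vine (Suc k)) (vine (Suc k))"
    using sends_leaves_swap_cones assms by simp
  have "[False] \<parallel> w" using leaves_parallel[of "[False]" "vine (Suc k)" w] assms by simp
  then show "maps_rigidly (swap_cones [False] w) w [False]" by (rule maps_rigidly_swap_cones(2))
qed

text \<open>Induction along the vine: first move the image of the leaf 0 back to 0 by a swap, then
  the map acts on the right half, on the shorter vine.\<close>
lemma vine_permutation_in_generated:
  "bij h \<Longrightarrow> sends_leaves h (vine k) (vine k) \<Longrightarrow> h \<in> generated thompson_gens"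
proof (induction k arbitrary: h)
  case 0
  then have "maps_rigidly h [] []" by (simp add: sends_leaves_def)
  then have "h = id" by (auto simp: maps_rigidly_def)
  then show ?case by (simp only: id_in_generated)
next
  case (Suc k)
  have fixing: "g \<in> generated thompson_gens"
    if "bij g" "sends_leaves g (vine (Suc k)) (vine (Suc k))" "maps_rigidly g [False] [False]" for g
    using on_right_if_fixes_left_leaf[OF that] Suc.IH on_right_in_generated by metis
  obtain w where w: "w \<in> set (leaves (vine (Suc k)))" "maps_rigidly h [False] w"
    using Suc.prems(2) by (auto simp: sends_leaves_def)
  show ?case
  proof (cases "w = [False]")
    case True
    then show ?thesis using fixing[OF Suc.prems] w(2) by simp
  next
    case False
    let ?t = "swap_cones [False] w"
    have t: "?t \<in> generated thompson_gens" "bij ?t"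
      using swap_cones_vine_leaf[OF w(1) False] by blast+
    have "?t \<circ> h \<in> generated thompson_gens"
      using swap_cones_vine_leaf[OF w(1) False]
      by (intro fixing bij_comp[OF Suc.prems(1)] sends_leaves_comp[OF Suc.prems(2)]
          maps_rigidly_comp[OF w(2)]) blast+
    then have "inv ?t \<circ> (?t \<circ> h) \<in> generated thompson_gens"
      using t(1) comp_in_generated inv_in_generated_thompson_gens by blast
    moreover have "inv ?t \<circ> (?t \<circ> h) = h"
      using t(2) by (simp add: comp_assoc[symmetric] bij_is_inj inv_o_cancel)
    ultimately show ?thesis by simp
  qed
qed

section \<open>Finite generation of V\<close>

definition prefix_free :: "bool list set \<Rightarrow> bool" where
  "prefix_free W \<longleftrightarrow> (\<forall>a\<in>W. \<forall>b\<in>W. prefix a b \<longrightarrow> a = b)"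

definition covering :: "bool list set \<Rightarrow> bool" where
  "covering W \<longleftrightarrow> (\<forall>x. \<exists>w\<in>W. x \<in> cone w)"

lemma prefix_free_Cons:
  assumes "prefix_free W"
  shows "prefix_free {w. c # w \<in> W}"
  unfolding prefix_free_def
proof (intro ballI impI)
  fix a b
  assume "a \<in> {w. c # w \<in> W}" "b \<in> {w. c # w \<in> W}" "prefix a b"
  then have "c # a = c # b"
    using assms[unfolded prefix_free_def, rule_format, of "c # a" "c # b"] by simp
  then show "a = b" by simp
qed

lemma covering_Cons:
  assumes "covering W" "[] \<notin> W"
  shows "covering {w. c # w \<in> W}"
  unfolding covering_def
proof
  fix x
  obtain w where w: "w \<in> W" "scons c x \<in> cone w" using assms(1) covering_def by blast
  then obtain d w' where "w = d # w'" using assms(2) by (cases w) auto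
  then show "\<exists>w\<in>{w. c # w \<in> W}. x \<in> cone w" using w by auto
qed

lemma leaves_of_prefix_code:
  "(\<forall>w\<in>W. length w \<le> n) \<Longrightarrow> prefix_free W \<Longrightarrow> covering W \<Longrightarrow> \<exists>t. set (leaves t) = W"
proof (induction n arbitrary: W)
  case 0
  obtain w where "w \<in> W" using 0(3) unfolding covering_def by blast
  then have "W = {[]}" using 0(1) by auto
  then show ?case by (intro exI[of _ Leaf]) simp
next
  case (Suc n)
  show ?case
  proof (cases "[] \<in> W")
    case True
    have "w = []" if "w \<in> W" for w
      using Suc.prems(2) True that unfolding prefix_free_def by (metis Nil_prefix)
    then have "W = {[]}" using True by blast
    then show ?thesis by (intro exI[of _ Leaf]) simp
  next
    case False
    have "\<exists>t. set (leaves t) = {w. c # w \<in> W}" for c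
      using Suc.prems False by (intro Suc.IH prefix_free_Cons covering_Cons) auto
    then obtain t0 t1 where t0: "set (leaves t0) = {w. False # w \<in> W}"
      and t1: "set (leaves t1) = {w. True # w \<in> W}" by blast
    have "set (leaves (Caret t0 t1)) = W"
    proof (intro equalityI subsetI)
      fix w
      assume "w \<in> set (leaves (Caret t0 t1))"
      then show "w \<in> W" using t0 t1 by auto
    next
      fix w
      assume w: "w \<in> W"
      then obtain d w' where "w = d # w'" using False by (cases w) auto
      then show "w \<in> set (leaves (Caret t0 t1))" using w t0 t1 by (cases d) auto
    qed
    then show ?thesis by blast
  qed
qed

lemma maps_rigidly_image_prefix_free:
  assumes "inj v" "\<forall>u\<in>D. maps_rigidly v u (\<sigma> u)" "prefix_free D"
  shows "prefix_free (\<sigma> ` D)" "inj_on \<sigma> D"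
proof -
  have eq: "u = u'" if "u \<in> D" "u' \<in> D" "prefix (\<sigma> u) (\<sigma> u')" for u u'
  proof -
    have "prefix u u' \<or> prefix u' u"
      using maps_rigidly_reflect_prefix[OF assms(1)] assms(2) that by blast
    then show "u = u'" using assms(3) that(1,2) unfolding prefix_free_def by blast
  qed
  show "prefix_free (\<sigma> ` D)" unfolding prefix_free_def using eq by blast
  show "inj_on \<sigma> D" using eq by (intro inj_onI) simp
qed

lemma maps_rigidly_image_covering:
  assumes "surj v" "\<forall>u\<in>D. maps_rigidly v u (\<sigma> u)" "covering D"
  shows "covering (\<sigma> ` D)"
  unfolding covering_def
proof
  fix x
  obtain z where z: "x = v z" using assms(1) by (rule surjE)
  obtain u where u: "u \<in> D" "z \<in> cone u" using assms(3) covering_def by blast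
  have "v z = v (prefix_app u (sdrop (length u) z))" using cone_decomp[OF u(2)] by (rule arg_cong)
  also have "\<dots> = prefix_app (\<sigma> u) (sdrop (length u) z)"
    using assms(2) u(1) unfolding maps_rigidly_def by blast
  finally have "x \<in> cone (\<sigma> u)" using z by simp
  then show "\<exists>w\<in>\<sigma> ` D. x \<in> cone w" using u(1) by blast
qed

lemma in_generated_if_sends_leaves:
  assumes "bij v" "sends_leaves v s t" "length (leaves s) = length (leaves t)"
  shows "v \<in> generated thompson_gens"
proof -
  define n where "n = length (leaves s) - 1"
  obtain g1 where g1: "g1 \<in> generated thompson_gens" "maps_leaves g1 s (vine n)"
    using maps_leaves_to_vine[of s] unfolding n_def by blast
  obtain g2 where g2: "g2 \<in> generated thompson_gens" "maps_leaves g2 t (vine n)"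
    using maps_leaves_to_vine[of t] unfolding n_def assms(3) by blast
  have b: "bij g1" "bij g2" using g1(1) g2(1) bij_generated_thompson_gens by auto
  define h where "h = g2 \<circ> (v \<circ> inv g1)"
  have "sends_leaves (inv g1) (vine n) s"
    using maps_leaves_imp_sends_leaves maps_leaves_inv[OF b(1) g1(2)] by blast
  then have "sends_leaves (v \<circ> inv g1) (vine n) t" using assms(2) by (rule sends_leaves_comp)
  then have "sends_leaves h (vine n) (vine n)"
    unfolding h_def using maps_leaves_imp_sends_leaves[OF g2(2)] by (rule sends_leaves_comp)
  moreover have "bij h" unfolding h_def using assms(1) b by (intro bij_comp bij_imp_bij_inv)
  ultimately have "h \<in> generated thompson_gens" using vine_permutation_in_generated by blast
  then have "inv g2 \<circ> h \<circ> g1 \<in> generated thompson_gens"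
    using comp_in_generated inv_in_generated_thompson_gens g1(1) g2(1) by blast
  moreover have "inv g2 \<circ> h \<circ> g1 = v"
    unfolding h_def using b by (auto simp: bij_is_inj bij_is_surj surj_f_inv_f)
  ultimately show ?thesis by simp
qed

lemma thompsonV_subset_generated: "thompsonV \<subseteq> generated thompson_gens"
proof
  fix v
  assume "v \<in> thompsonV"
  then have v: "bij v" "uniformly_rigid v" by (auto simp: thompsonV_iff)
  then obtain N where N: "rigid_at_depth v N" unfolding uniformly_rigid_def by blast
  define D where "D = {u :: bool list. length u = N}"
  define \<sigma> where "\<sigma> u = (SOME w. maps_rigidly v u w)" for u
  have \<sigma>: "\<forall>u\<in>D. maps_rigidly v u (\<sigma> u)"
  proof
    fix u
    assume "u \<in> D"
    then have "\<exists>w. maps_rigidly v u w" using N unfolding rigid_at_depth_def D_def by blast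
    then show "maps_rigidly v u (\<sigma> u)" unfolding \<sigma>_def by (rule someI_ex)
  qed
  have D: "prefix_free D" "covering D" "finite D"
    unfolding prefix_free_def covering_def D_def
    using stake_in_cone length_stake finite_words_of_length by (auto simp: prefix_def, blast)
  have W: "prefix_free (\<sigma> ` D)" "inj_on \<sigma> D" "covering (\<sigma> ` D)"
    using maps_rigidly_image_prefix_free[OF bij_is_inj[OF v(1)] \<sigma> D(1)]
      maps_rigidly_image_covering[OF bij_is_surj[OF v(1)] \<sigma> D(2)] by blast+
  obtain s where s: "set (leaves s) = D"
    using leaves_of_prefix_code[of D N] D unfolding D_def by auto
  obtain t where t: "set (leaves t) = \<sigma> ` D"
    using leaves_of_prefix_code[of "\<sigma> ` D" "Max (length ` \<sigma> ` D)"] W D(3) by auto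
  have "length (leaves s) = card D" using distinct_card[OF distinct_leaves[of s]] s by simp
  also have "\<dots> = card (\<sigma> ` D)" using card_image[OF W(2)] by simp
  also have "\<dots> = length (leaves t)" using distinct_card[OF distinct_leaves[of t]] t by simp
  finally have "length (leaves s) = length (leaves t)" .
  moreover have "sends_leaves v s t" using \<sigma> s t unfolding sends_leaves_def by blast
  ultimately show "v \<in> generated thompson_gens" using in_generated_if_sends_leaves v(1) by blast
qed

theorem generates_V_thompson_gens: "generates_V thompson_gens"
  unfolding generates_V_def
  using thompsonV_subset_generated subset_thompsonV_generated[OF thompson_gens_subset_thompsonV]
    thompson_gens_subset_thompsonV by (simp add: generated_def)

section \<open>Periods as a conjugacy invariant\<close>

definition min_period :: "(cantor \<Rightarrow> cantor) \<Rightarrow> cantor \<Rightarrow> nat \<Rightarrow> bool" where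
  "min_period g x p \<longleftrightarrow> 0 < p \<and> (g ^^ p) x = x \<and> (\<forall>q. 0 < q \<and> q < p \<longrightarrow> (g ^^ q) x \<noteq> x)"

definition periods :: "(cantor \<Rightarrow> cantor) \<Rightarrow> nat set" where
  "periods g = {p. \<exists>x. min_period g x p}"

lemma funpow_conj_apply:
  assumes "bij k"
  shows "((k \<circ> g \<circ> inv k) ^^ q) x = k ((g ^^ q) (inv k x))"
proof (induction q arbitrary: x)
  case 0
  then show ?case using assms by (simp add: bij_is_surj surj_f_inv_f)
next
  case (Suc q)
  have "((k \<circ> g \<circ> inv k) ^^ Suc q) x = k (g (inv k (((k \<circ> g \<circ> inv k) ^^ q) x)))"
    by simp
  also have "\<dots> = k (g (inv k (k ((g ^^ q) (inv k x)))))" by (simp only: Suc.IH)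
  also have "\<dots> = k ((g ^^ Suc q) (inv k x))" using assms by (simp add: bij_is_inj)
  finally show ?case .
qed

lemma min_period_conj:
  assumes "bij k"
  shows "min_period (k \<circ> g \<circ> inv k) (k x) p \<longleftrightarrow> min_period g x p"
proof -
  have "((k \<circ> g \<circ> inv k) ^^ q) (k x) = k x \<longleftrightarrow> (g ^^ q) x = x" for q
    using assms by (simp add: funpow_conj_apply bij_is_inj inj_eq)
  then show ?thesis unfolding min_period_def by simp
qed

lemma periods_conj:
  assumes "bij k"
  shows "periods (k \<circ> g \<circ> inv k) = periods g"
proof -
  have "(\<exists>x. min_period (k \<circ> g \<circ> inv k) x p) \<longleftrightarrow> (\<exists>x. min_period g x p)" for p
    using min_period_conj[OF assms] surj_f_inv_f[OF bij_is_surj[OF assms]] by metis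
  then show ?thesis unfolding periods_def by simp
qed

lemma periods_eq_if_conj_class_eq:
  assumes "conj_class g1 = conj_class g2"
  shows "periods g1 = periods g2"
proof -
  have "g2 = id \<circ> g2 \<circ> inv id" by simp
  then have "g2 \<in> conj_class g1"
    using assms id_in_thompsonV unfolding conj_class_def by blast
  then obtain k where "k \<in> thompsonV" "g2 = k \<circ> g1 \<circ> inv k" unfolding conj_class_def by blast
  then show ?thesis using periods_conj thompsonV_iff by metis
qed

lemma periods_id: "periods id = {1}"
proof -
  have "min_period id x p \<longleftrightarrow> p = 1" for x p
    by (simp add: min_period_def; presburger)
  then show ?thesis unfolding periods_def by (simp only:) simp
qed

lemma funpow_on_left: "on_left g ^^ q = on_left (g ^^ q)"
  by (induction q) (simp_all only: funpow.simps on_left_id on_left_comp)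

lemma periods_on_left: "periods (on_left g) = insert 1 (periods g)"
proof -
  have left: "min_period (on_left g) (scons False y) p \<longleftrightarrow> min_period g y p" for y p
    unfolding min_period_def funpow_on_left by simp
  have right: "min_period (on_left g) (scons True y) p \<longleftrightarrow> p = 1" for y p
    unfolding min_period_def funpow_on_left by (simp; presburger)
  have "(\<exists>x. min_period (on_left g) x p) \<longleftrightarrow> p = 1 \<or> (\<exists>y. min_period g y p)" for p
    using left right by (metis scons_cases)
  then show ?thesis unfolding periods_def by auto
qed

definition twist :: "(cantor \<Rightarrow> cantor) \<Rightarrow> cantor \<Rightarrow> cantor" where
  "twist g = flip \<circ> on_left g"

lemma twist_scons [simp]:
  "twist g (scons False y) = scons True (g y)"
  "twist g (scons True y) = scons False y"
  by (simp_all add: twist_def)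

lemma funpow_twist_even: "(twist g ^^ (2 * m)) (scons a y) = scons a ((g ^^ m) y)"
proof (induction m)
  case (Suc m)
  have "(twist g ^^ (2 * Suc m)) (scons a y) = twist g (twist g ((twist g ^^ (2 * m)) (scons a y)))"
    by simp
  also have "\<dots> = scons a (g ((g ^^ m) y))" unfolding Suc by (cases a) simp_all
  finally show ?case by simp
qed simp

lemma funpow_twist_odd: "(twist g ^^ Suc (2 * m)) (scons a y) \<noteq> scons a y"
proof -
  have "twist g z 0 = (\<not> z 0)" for z by (cases z rule: scons_cases) (metis scons_0 twist_scons)
  then have "(twist g ^^ Suc (2 * m)) (scons a y) 0 = (\<not> a)" using funpow_twist_even by simp
  then show ?thesis by (metis scons_0)
qed

lemma funpow_twist_fixed:
  "(twist g ^^ q) (scons a y) = scons a y \<longleftrightarrow> even q \<and> (g ^^ (q div 2)) y = y"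
proof (cases "even q")
  case True
  then have "q = 2 * (q div 2)" by simp
  then show ?thesis using True funpow_twist_even[where m = "q div 2"] by simp
next
  case False
  then have "q = Suc (2 * (q div 2))" by presburger
  then show ?thesis using False funpow_twist_odd[where m = "q div 2"] by metis
qed

lemma min_period_twist:
  "min_period (twist g) (scons a y) p \<longleftrightarrow> (\<exists>m. p = 2 * m \<and> min_period g y m)"
proof
  assume p: "min_period (twist g) (scons a y) p"
  then obtain m where m: "p = 2 * m" unfolding min_period_def funpow_twist_fixed by blast
  have "min_period g y m" unfolding min_period_def
  proof (intro conjI allI impI)
    show "0 < m" "(g ^^ m) y = y" using p m unfolding min_period_def funpow_twist_fixed by auto
    fix q
    assume "0 < q \<and> q < m"
    then have "0 < 2 * q \<and> 2 * q < p" using m by simp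
    then have "\<not> (even (2 * q) \<and> (g ^^ (2 * q div 2)) y = y)"
      using p unfolding min_period_def funpow_twist_fixed by blast
    then show "(g ^^ q) y \<noteq> y" by simp
  qed
  then show "\<exists>m. p = 2 * m \<and> min_period g y m" using m by blast
next
  assume "\<exists>m. p = 2 * m \<and> min_period g y m"
  then obtain m where m: "p = 2 * m" "min_period g y m" by blast
  show "min_period (twist g) (scons a y) p" unfolding min_period_def funpow_twist_fixed
  proof (intro conjI allI impI)
    show "0 < p" "even p" "(g ^^ (p div 2)) y = y" using m unfolding min_period_def by auto
    fix q
    assume "0 < q \<and> q < p"
    then have "even q \<Longrightarrow> 0 < q div 2 \<and> q div 2 < m" using m(1) by auto
    then show "\<not> (even q \<and> (g ^^ (q div 2)) y = y)" using m(2) unfolding min_period_def by blast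
  qed
qed

lemma periods_twist: "periods (twist g) = (\<lambda>m. 2 * m) ` periods g"
proof -
  have "(\<exists>x. min_period (twist g) x p) \<longleftrightarrow> (\<exists>m y. p = 2 * m \<and> min_period g y m)" for p
    using min_period_twist by (metis scons_cases)
  then show ?thesis unfolding periods_def by auto
qed

fun family :: "bool list \<Rightarrow> cantor \<Rightarrow> cantor" where
  "family [] = id"
| "family (b # bs) = (if b then twist (family bs) else on_left (family bs))"

fun exponents :: "bool list \<Rightarrow> nat set" where
  "exponents [] = {0}"
| "exponents (b # bs) = (if b then Suc ` exponents bs else insert 0 (exponents bs))"

lemma periods_family: "periods (family bs) = (\<lambda>e. 2 ^ e) ` exponents bs"
proof (induction bs)
  case Nil
  show ?case by (simp only: family.simps exponents.simps periods_id) simp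
next
  case (Cons b bs)
  then show ?case by (simp add: periods_twist periods_on_left image_image)
qed

text \<open>0 \<in> exponents (encode (a # as)) records a, and removing 0 leaves
  Suc ` exponents (encode as); hence the exponent set determines as.\<close>
fun encode :: "bool list \<Rightarrow> bool list" where
  "encode [] = []"
| "encode (a # as) = (if a then [False, True] else [True]) @ encode as"

lemma length_encode: "length (encode as) \<le> 2 * length as"
  by (induction as) auto

lemma exponents_encode_inj:
  "length as = length bs \<Longrightarrow> exponents (encode as) = exponents (encode bs) \<Longrightarrow> as = bs"
proof (induction as arbitrary: bs)
  case (Cons a as)
  then obtain b bs' where bs: "bs = b # bs'" by (cases bs) auto
  have zero: "0 \<in> exponents (encode (c # cs)) \<longleftrightarrow> c" for c cs by simp
  have rest: "exponents (encode (c # cs)) - {0} = Suc ` exponents (encode cs)" for c cs by auto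
  have "a = b" using Cons.prems(2) zero[of a as] zero[of b bs'] bs by simp
  moreover have "Suc ` exponents (encode as) = Suc ` exponents (encode bs')"
    using rest[of a as] rest[of b bs'] Cons.prems(2) bs by simp
  then have "as = bs'" using Cons.IH Cons.prems(1) bs by (simp add: inj_image_eq_iff)
  ultimately show ?case using bs by simp
qed simp

fun left_word :: "bool list \<Rightarrow> (cantor \<Rightarrow> cantor) list" where
  "left_word [] = []"
| "left_word (b # bs) = (if b then [on_left flip] else []) @ [x0_inv] @ left_word bs @ [x0]"

fun family_word :: "bool list \<Rightarrow> (cantor \<Rightarrow> cantor) list" where
  "family_word [] = []"
| "family_word (b # bs) = (if b then [flip] else []) @ left_word bs"

lemma word_eval_left_word: "word_eval (left_word bs) = on_left (family bs)"
proof (induction bs)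
  case Nil
  show ?case by (simp only: left_word.simps word_eval_Nil family.simps on_left_id)
next
  case (Cons b bs)
  have "word_eval ([x0_inv] @ left_word bs @ [x0]) = on_left (on_left (family bs))"
    by (simp only: word_eval_append Cons on_left_on_left word_eval_Cons word_eval_Nil comp_id
        comp_assoc)
  then show ?case
    by (cases b) (simp_all only: left_word.simps family.simps if_True if_False append.simps
        word_eval_Cons twist_def on_left_comp)
qed

lemma word_eval_family_word: "word_eval (family_word bs) = family bs"
proof (cases bs)
  case (Cons b bs')
  then show ?thesis
    by (cases b) (simp_all only: family_word.simps family.simps if_True if_False append.simps
        word_eval_Cons word_eval_left_word twist_def)
qed (simp only: family_word.simps family.simps word_eval_Nil)

lemma set_family_word: "set (family_word bs) \<subseteq> thompson_gens"
proof -
  have "set (left_word bs) \<subseteq> thompson_gens" for bs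
    by (induction bs) (auto simp: thompson_gens_def base_gens_def)
  then show ?thesis by (cases bs rule: family_word.cases) (auto simp: thompson_gens_def base_gens_def)
qed

lemma length_family_word: "length (family_word bs) \<le> 3 * length bs + 1"
proof -
  have left: "length (left_word bs) \<le> 3 * length bs" for bs by (induction bs) auto
  show ?thesis
  proof (cases bs)
    case (Cons b bs')
    then show ?thesis using left[of bs'] by simp
  qed simp
qed

lemma family_in_thompsonV: "family bs \<in> thompsonV"
proof -
  have "family bs \<in> generated thompson_gens"
    unfolding generated_def sym_gens_def using set_family_word word_eval_family_word
    by (metis (mono_tags, lifting) le_supI1 mem_Collect_eq)
  then show ?thesis using subset_thompsonV_generated[OF thompson_gens_subset_thompsonV] by blast
qed

section \<open>Conjugacy growth\<close>

lemma word_length_le: "set l \<subseteq> sym_gens S \<Longrightarrow> word_length S (word_eval l) \<le> length l"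
  unfolding word_length_def by (rule Least_le) blast

lemma word_length_witness:
  assumes "generates_V S" "g \<in> thompsonV"
  obtains l where "set l \<subseteq> sym_gens S" "word_eval l = g" "length l = word_length S g"
proof -
  have "g \<in> {word_eval l | l. set l \<subseteq> sym_gens S}"
    using assms unfolding generates_V_def by (metis (no_types, lifting))
  then have "\<exists>n l. length l = n \<and> set l \<subseteq> sym_gens S \<and> word_eval l = g" by blast
  then have "\<exists>l. length l = word_length S g \<and> set l \<subseteq> sym_gens S \<and> word_eval l = g"
    unfolding word_length_def by (rule LeastI_ex)
  then show ?thesis using that by blast
qed

lemma word_length_comp:
  assumes "generates_V S" "f \<in> thompsonV" "g \<in> thompsonV"
  shows "word_length S (f \<circ> g) \<le> word_length S f + word_length S g"
proof -
  obtain lf where "set lf \<subseteq> sym_gens S" "word_eval lf = f" "length lf = word_length S f"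
    using word_length_witness[OF assms(1,2)] .
  moreover obtain lg where "set lg \<subseteq> sym_gens S" "word_eval lg = g" "length lg = word_length S g"
    using word_length_witness[OF assms(1,3)] .
  ultimately show ?thesis using word_length_le[of "lf @ lg" S] by (simp add: word_eval_append)
qed

lemma word_eval_in_thompsonV: "set l \<subseteq> thompsonV \<Longrightarrow> word_eval l \<in> thompsonV"
  by (induction l) (simp_all add: id_in_thompsonV comp_in_thompsonV)

lemma word_length_linear_bound:
  assumes "generates_V S" "finite Z" "Z \<subseteq> thompsonV"
  obtains M where "\<And>l. set l \<subseteq> Z \<Longrightarrow> word_length S (word_eval l) \<le> M * length l"
proof -
  define M where "M = Max (word_length S ` Z)"
  have "word_length S (word_eval l) \<le> M * length l" if "set l \<subseteq> Z" for l
    using that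
  proof (induction l)
    case Nil
    show ?case using word_length_le[of "[]" S] by (simp add: id_def)
  next
    case (Cons a l)
    have "word_length S (word_eval (a # l)) = word_length S (a \<circ> word_eval l)"
      by (simp only: word_eval_Cons)
    also have "\<dots> \<le> word_length S a + word_length S (word_eval l)"
      using Cons.prems assms(1,3) word_length_comp word_eval_in_thompsonV by fastforce
    also have "\<dots> \<le> M + M * length l"
      using Cons assms(2) unfolding M_def by (intro add_mono Max_ge) auto
    also have "\<dots> = M * length (a # l)" by simp
    finally show ?case .
  qed
  then show ?thesis by (rule that)
qed

definition conj_classes_upto :: "(cantor \<Rightarrow> cantor) set \<Rightarrow> nat \<Rightarrow> (cantor \<Rightarrow> cantor) set set" where
  "conj_classes_upto S n = {conj_class g | g. g \<in> thompsonV \<and> word_length S g \<le> n}"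

lemma conj_growth_eq_card: "conj_growth S n = card (conj_classes_upto S n)"
  by (simp add: conj_growth_def conj_classes_upto_def)

lemma conj_classes_upto_subset_words:
  assumes "generates_V S"
  shows "conj_classes_upto S n \<subseteq> conj_class ` word_eval ` {l. set l \<subseteq> sym_gens S \<and> length l \<le> n}"
proof
  fix C
  assume "C \<in> conj_classes_upto S n"
  then obtain g where g: "C = conj_class g" "g \<in> thompsonV" "word_length S g \<le> n"
    unfolding conj_classes_upto_def by blast
  obtain l where "set l \<subseteq> sym_gens S" "word_eval l = g" "length l = word_length S g"
    using word_length_witness[OF assms g(2)] .
  then show "C \<in> conj_class ` word_eval ` {l. set l \<subseteq> sym_gens S \<and> length l \<le> n}"
    using g by force
qed

lemma finite_conj_classes_upto:
  assumes "finite S" "generates_V S"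
  shows "finite (conj_classes_upto S n)"
  using finite_subset[OF conj_classes_upto_subset_words[OF assms(2)]]
    finite_lists_length_le[of "sym_gens S" n] assms(1) by (simp add: sym_gens_def)

lemma conj_growth_mono:
  assumes "finite S" "generates_V S" "n \<le> m"
  shows "conj_growth S n \<le> conj_growth S m"
  unfolding conj_growth_eq_card using assms
  by (intro card_mono finite_conj_classes_upto) (auto simp: conj_classes_upto_def)

lemma sum_powers_le: "(\<Sum>i\<le>n. (a::nat) ^ i) \<le> (a + 1) ^ n"
proof (induction n)
  case (Suc n)
  have "a * a ^ n \<le> a * (a + 1) ^ n" by (intro mult_left_mono power_mono) auto
  then have "(\<Sum>i\<le>Suc n. a ^ i) \<le> (a + 1) ^ n + a * (a + 1) ^ n"
    using add_mono[OF Suc.IH] by simp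
  also have "\<dots> = (a + 1) ^ Suc n" by (simp add: algebra_simps)
  finally show ?case .
qed simp

lemma conj_growth_le_power:
  assumes "finite S" "generates_V S"
  shows "conj_growth S n \<le> (card (sym_gens S) + 1) ^ n"
proof -
  let ?L = "{l. set l \<subseteq> sym_gens S \<and> length l \<le> n}"
  have fin: "finite (sym_gens S)" using assms(1) by (simp add: sym_gens_def)
  then have finL: "finite ?L" by (rule finite_lists_length_le)
  have "conj_growth S n \<le> card (conj_class ` word_eval ` ?L)"
    unfolding conj_growth_eq_card using conj_classes_upto_subset_words[OF assms(2)] finL
    by (intro card_mono) auto
  also have "\<dots> \<le> card (word_eval ` ?L)" using finL by (intro card_image_le finite_imageI)
  also have "\<dots> \<le> card ?L" using finL by (rule card_image_le)
  also have "\<dots> = (\<Sum>i\<le>n. card (sym_gens S) ^ i)" by (rule card_lists_length_le[OF fin])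
  also have "\<dots> \<le> (card (sym_gens S) + 1) ^ n" by (rule sum_powers_le)
  finally show ?thesis .
qed

lemma word_length_family_encode:
  assumes "\<And>l. set l \<subseteq> thompson_gens \<Longrightarrow> word_length S (word_eval l) \<le> M * length l"
  shows "word_length S (family (encode as)) \<le> M * (6 * length as + 1)"
proof -
  have "word_length S (family (encode as)) = word_length S (word_eval (family_word (encode as)))"
    by (simp only: word_eval_family_word)
  also have "\<dots> \<le> M * length (family_word (encode as))" by (rule assms[OF set_family_word])
  also have "\<dots> \<le> M * (6 * length as + 1)"
    using length_family_word[of "encode as"] length_encode[of as] by (intro mult_le_mono2) linarith
  finally show ?thesis .
qed

lemma inj_on_conj_class_family_encode:
  "inj_on (\<lambda>as. conj_class (family (encode as))) {as. length as = m}"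
proof (rule inj_onI)
  fix as bs
  assume as: "as \<in> {as. length as = m}" and bs: "bs \<in> {as. length as = m}"
    and eq: "conj_class (family (encode as)) = conj_class (family (encode bs))"
  have "periods (family (encode as)) = periods (family (encode bs))"
    using eq by (rule periods_eq_if_conj_class_eq)
  then have "(\<lambda>e. (2::nat) ^ e) ` exponents (encode as) = (\<lambda>e. 2 ^ e) ` exponents (encode bs)"
    by (simp only: periods_family)
  moreover have "inj (\<lambda>e. (2::nat) ^ e)" by (rule injI) simp
  ultimately have "exponents (encode as) = exponents (encode bs)"
    by (simp add: inj_image_eq_iff)
  then show "as = bs" using exponents_encode_inj as bs by simp
qed

lemma power_le_conj_growth:
  assumes "finite S" "generates_V S"
  obtains M where "\<And>m. 2 ^ m \<le> conj_growth S (M * (6 * m + 1))"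
proof -
  obtain M where M: "\<And>l. set l \<subseteq> thompson_gens \<Longrightarrow> word_length S (word_eval l) \<le> M * length l"
    using word_length_linear_bound[OF assms(2) finite_thompson_gens thompson_gens_subset_thompsonV]
    by blast
  have "2 ^ m \<le> conj_growth S (M * (6 * m + 1))" for m
  proof -
    let ?A = "{as :: bool list. length as = m}"
    let ?F = "\<lambda>as. conj_class (family (encode as))"
    have "?F ` ?A \<subseteq> conj_classes_upto S (M * (6 * m + 1))"
      unfolding conj_classes_upto_def
      using word_length_family_encode[OF M] family_in_thompsonV by fastforce
    then have "card (?F ` ?A) \<le> conj_growth S (M * (6 * m + 1))"
      unfolding conj_growth_eq_card by (rule card_mono[OF finite_conj_classes_upto[OF assms]])
    moreover have "card (?F ` ?A) = 2 ^ m"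
      using card_image[OF inj_on_conj_class_family_encode] card_lists_length_eq[of "UNIV :: bool set" m] by simp
    ultimately show ?thesis by simp
  qed
  then show ?thesis by (rule that)
qed

lemma le_mult_add_self: "0 < c \<Longrightarrow> x \<le> c * x + (c::nat)"
  by (simp add: trans_le_add1)

lemma conj_growth_le_exp:
  assumes "finite S" "generates_V S"
  shows "growth_le (conj_growth S) (\<lambda>n. 2 ^ n)"
proof -
  define c where "c = card (sym_gens S) + 1"
  have c: "0 < c" unfolding c_def by simp
  have "conj_growth S n \<le> c * 2 ^ (c * n + c) + c" for n
  proof -
    have "conj_growth S n \<le> c ^ n" using conj_growth_le_power[OF assms] c_def by simp
    also have "\<dots> \<le> (2 ^ c) ^ n" by (rule power_mono) (simp_all add: less_exp less_imp_le)
    also have "\<dots> = 2 ^ (c * n)" by (simp add: power_mult)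
    also have "\<dots> \<le> 2 ^ (c * n + c)" by (rule power_increasing) simp_all
    also have "\<dots> \<le> c * 2 ^ (c * n + c) + c" using c by (rule le_mult_add_self)
    finally show ?thesis .
  qed
  then show ?thesis unfolding growth_le_def using c by blast
qed

lemma exp_le_conj_growth:
  assumes "finite S" "generates_V S"
  shows "growth_le (\<lambda>n. 2 ^ n) (conj_growth S)"
proof -
  obtain M where M: "\<And>m. 2 ^ m \<le> conj_growth S (M * (6 * m + 1))"
    using power_le_conj_growth[OF assms] by blast
  define c where "c = 7 * M + 1"
  have c: "0 < c" unfolding c_def by simp
  have "2 ^ n \<le> c * conj_growth S (c * n + c) + c" for n
  proof -
    have "(2::nat) ^ n \<le> conj_growth S (M * (6 * n + 1))" by (rule M)
    also have "\<dots> \<le> conj_growth S (c * n + c)"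
      using assms by (rule conj_growth_mono) (simp add: c_def algebra_simps)
    also have "\<dots> \<le> c * conj_growth S (c * n + c) + c" using c by (rule le_mult_add_self)
    finally show ?thesis .
  qed
  then show ?thesis unfolding growth_le_def using c by blast
qed

theorem mainTheorem8:
  shows "(\<exists>S. finite S \<and> generates_V S) \<and>
    (\<forall>S. finite S \<and> generates_V S \<longrightarrow> growth_equiv (conj_growth S) (\<lambda>n. 2 ^ n))"
  using finite_thompson_gens generates_V_thompson_gens conj_growth_le_exp exp_le_conj_growth
  unfolding growth_equiv_def by blast

end
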